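(* Let $\mathbf{u},\mathbf{v}\in\mathbb{R}^2$ be fixed linearly independent unit vectors, and let $D_1\subset\mathbb{R}^2$ be an open disc of radius $r_1$ centered at the origin. Let $\mathbf{f}=(f_1,f_2)$ be a vector field on $\mathbb{R}^2$ with $f_1,f_2\in C^2_c(D_1)$. Then the transverse V-line transform satisfies $\mathcal{T}\mathbf{f}\equiv 0$ on $\mathbb{R}^2$ if and only if $\operatorname{div}\mathbf{f}=\frac{\partial f_1}{\partial x_1}+\frac{\partial f_2}{\partial x_2}=0$.
   Context: For a function $h$ on $\mathbb{R}^2$ and a unit vector $\mathbf{u}$, the divergent beam transform is $\mathcal{X}_{\mathbf{u}}h(\mathbf{x})=\int_0^\infty h(\mathbf{x}+t\mathbf{u})\,dt$. For $\mathbf{x}=(x_1,x_2)$ set $\mathbf{x}^\perp=(-x_2,x_1)$. The transverse V-line transform of $\mathbf{f}$ (with respect to the fixed directions $\mathbf{u},\mathbf{v}$) is the function on $\mathbb{R}^2$ given by $\mathcal{T}\mathbf{f}=-\mathcal{X}_{\mathbf{u}}(\mathbf{f}\cdot\mathbf{u}^\perp)+\mathcal{X}_{\mathbf{v}}(\mathbf{f}\cdot\mathbf{v}^\perp)$, where $\cdot$ is the Euclidean dot product. *)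

theory Defs
  imports "HOL-Analysis.Analysis"
begin

definition perp :: "real^2 \<Rightarrow> real^2" where
  "perp x = vector [- (x$2), x$1]"

definition beam :: "real^2 \<Rightarrow> (real^2 \<Rightarrow> real) \<Rightarrow> real^2 \<Rightarrow> real" where
  "beam u h x = integral {0..} (\<lambda>t::real. h (x + t *\<^sub>R u))"

definition TV :: "real^2 \<Rightarrow> real^2 \<Rightarrow> (real^2 \<Rightarrow> real^2) \<Rightarrow> real^2 \<Rightarrow> real" where
  "TV u v f x = - beam u (\<lambda>y. f y \<bullet> perp u) x + beam v (\<lambda>y. f y \<bullet> perp v) x"

definition partial :: "2 \<Rightarrow> (real^2 \<Rightarrow> real) \<Rightarrow> real^2 \<Rightarrow> real" where
  "partial i g x = frechet_derivative g (at x) (axis i 1)"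

definition divergence :: "(real^2 \<Rightarrow> real^2) \<Rightarrow> real^2 \<Rightarrow> real" where
  "divergence f x = partial 1 (\<lambda>y. f y $ 1) x + partial 2 (\<lambda>y. f y $ 2) x"

definition C1_plane :: "(real^2 \<Rightarrow> real) \<Rightarrow> bool" where
  "C1_plane g \<longleftrightarrow> (\<forall>x. g differentiable (at x)) \<and>
     (\<forall>i. continuous_on UNIV (partial i g))"

definition C2_plane :: "(real^2 \<Rightarrow> real) \<Rightarrow> bool" where
  "C2_plane g \<longleftrightarrow> C1_plane g \<and> (\<forall>i. C1_plane (partial i g))"

definition supp :: "(real^2 \<Rightarrow> real) \<Rightarrow> (real^2) set" where
  "supp g = closure {x. g x \<noteq> 0}"

definition C2c :: "(real^2) set \<Rightarrow> (real^2 \<Rightarrow> real) \<Rightarrow> bool" where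
  "C2c D g \<longleftrightarrow> C2_plane g \<and> compact (supp g) \<and> supp g \<subseteq> D"

end

theory Submission
  imports Defs
begin

text \<open>With \<open>a = f \<bullet> perp u\<close> and \<open>b = f \<bullet> perp v\<close> the transform is \<open>beam v b - beam u a\<close>.
  Moving the vertex along \<open>v\<close>, \<open>beam v b\<close> has derivative \<open>-b\<close>, while differentiation under
  the integral sign gives \<open>beam u (\<partial>\<^sub>v a)\<close>; by the fundamental theorem of calculus along
  \<open>u\<close>-rays, \<open>beam u (\<partial>\<^sub>u b) = -b\<close>. Moreover \<open>\<partial>\<^sub>v a - \<partial>\<^sub>u b = (v \<bullet> perp u) div f\<close>, and
  \<open>v \<bullet> perp u \<noteq> 0\<close> by independence. If the transform vanishes, then \<open>beam u (\<partial>\<^sub>v a) = -b\<close>,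
  and differentiating once more along \<open>u\<close> gives \<open>\<partial>\<^sub>v a = \<partial>\<^sub>u b\<close>. If \<open>div f = 0\<close>, the
  transform is constant along lines in direction \<open>v\<close> and vanishes far out on them, where
  both rays miss the support.\<close>

lemma norm_add_scaleR_unit_ge:
  fixes x w :: "'a::real_normed_vector"
  assumes "norm w = 1"
  shows "\<bar>c\<bar> - norm x \<le> norm (x + c *\<^sub>R w)"
  using norm_diff_ineq[of "c *\<^sub>R w" x] assms by (simp add: add.commute)

lemma inner_real2: "x \<bullet> y = x$1 * y$1 + x$2 * y$2" for x y :: "real^2"
  by (simp add: inner_vec_def sum_2)

lemma norm_perp: "norm (perp w) = norm w"
  unfolding norm_eq_sqrt_inner by (simp add: inner_real2 perp_def algebra_simps)

lemma inner_perp_self: "w \<bullet> perp w = 0"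
  by (simp add: inner_real2 perp_def)

lemma inner_perp: "v \<bullet> perp u = u$1 * v$2 - u$2 * v$1"
  by (simp add: inner_real2 perp_def)

lemma independent_imp_inner_perp_nonzero:
  fixes u v :: "real^2"
  assumes "u \<noteq> v" and "independent {u, v}"
  shows "v \<bullet> perp u \<noteq> 0"
proof
  assume "v \<bullet> perp u = 0"
  then have det: "u$1 * v$2 = u$2 * v$1" by (simp add: inner_perp)
  have "v \<noteq> 0" using assms(2) dependent_zero by blast
  then have "v$1 \<noteq> 0 \<or> v$2 \<noteq> 0" by (auto simp: vec_eq_iff forall_2)
  then have "u = (u$1 / v$1) *\<^sub>R v \<or> u = (u$2 / v$2) *\<^sub>R v"
    using det by (auto simp: vec_eq_iff forall_2 field_simps)
  then have "u \<in> span {v}" by (metis span_base span_scale singletonI)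
  then show False using assms by (simp add: independent_insert)
qed

lemma frechet_derivative_plane:
  fixes g :: "real^2 \<Rightarrow> real"
  assumes "g differentiable (at y)"
  shows "frechet_derivative g (at y) k = k$1 * partial 1 g y + k$2 * partial 2 g y"
proof -
  have lin: "linear (frechet_derivative g (at y))"
    using assms by (rule linear_frechet_derivative)
  have "k = k$1 *\<^sub>R axis 1 1 + k$2 *\<^sub>R axis 2 1"
    by (simp add: vec_eq_iff forall_2 axis_def)
  then have "frechet_derivative g (at y) k
      = frechet_derivative g (at y) (k$1 *\<^sub>R axis 1 1 + k$2 *\<^sub>R axis 2 1)"
    by (rule arg_cong)
  then show ?thesis using lin by (simp add: linear_add linear_scale partial_def)
qed

lemma has_real_derivative_along_line:
  fixes y w :: "'a::real_normed_vector" and g :: "'a \<Rightarrow> real"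
  assumes "(g has_derivative D) (at (y + h *\<^sub>R w))"
  shows "((\<lambda>h. g (y + h *\<^sub>R w)) has_real_derivative D w) (at h)"
proof -
  interpret bounded_linear D using assms by (rule has_derivative_bounded_linear)
  have "((\<lambda>h. y + h *\<^sub>R w) has_derivative (\<lambda>k. k *\<^sub>R w)) (at h)"
    by (auto intro!: derivative_eq_intros)
  from has_derivative_compose[OF this assms]
  have "((\<lambda>h. g (y + h *\<^sub>R w)) has_derivative (\<lambda>k. D w * k)) (at h)"
    by (simp add: o_def scale mult.commute)
  then show ?thesis by (simp add: has_field_derivative_def)
qed

lemma has_real_derivative_along_line_at:
  fixes x w :: "'a::real_normed_vector"
  assumes "\<And>y. ((\<lambda>s. F (y + s *\<^sub>R w)) has_real_derivative D y) (at 0)"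
  shows "((\<lambda>s. F (x + s *\<^sub>R w)) has_real_derivative D (x + s\<^sub>0 *\<^sub>R w)) (at s\<^sub>0)"
proof -
  have "(\<lambda>s. F ((x + s\<^sub>0 *\<^sub>R w) + s *\<^sub>R w)) = (\<lambda>s. F (x + (s + s\<^sub>0) *\<^sub>R w))"
    by (simp add: scaleR_add_left add_ac)
  with assms[of "x + s\<^sub>0 *\<^sub>R w"] show ?thesis
    using DERIV_shift[of "\<lambda>s. F (x + s *\<^sub>R w)" _ 0 s\<^sub>0] by simp
qed

lemma has_derivative_C1_plane:
  "C1_plane g \<Longrightarrow> (g has_derivative frechet_derivative g (at y)) (at y)"
  unfolding C1_plane_def using frechet_derivative_works by blast

lemma continuous_on_C1_plane: "C1_plane g \<Longrightarrow> continuous_on UNIV g"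
  by (meson continuous_at_imp_continuous_on has_derivative_C1_plane has_derivative_continuous)

lemma continuous_on_frechet_derivative_C1_plane:
  assumes "C1_plane g"
  shows "continuous_on UNIV (\<lambda>y. frechet_derivative g (at y) k)"
proof -
  have "continuous_on UNIV (partial i g)" for i
    using assms unfolding C1_plane_def by blast
  then have "continuous_on UNIV (\<lambda>y. k$1 * partial 1 g y + k$2 * partial 2 g y)"
    by (intro continuous_on_add continuous_on_mult_left)
  moreover have "g differentiable (at y)" for y
    using assms unfolding C1_plane_def by blast
  ultimately show ?thesis by (simp add: frechet_derivative_plane)
qed

lemma frechet_derivative_lincomb:
  fixes g h :: "'a::real_normed_vector \<Rightarrow> real"
  assumes "g differentiable (at y)" and "h differentiable (at y)"
  shows "frechet_derivative (\<lambda>x. c * g x + d * h x) (at y)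
    = (\<lambda>k. c * frechet_derivative g (at y) k + d * frechet_derivative h (at y) k)"
  by (intro frechet_derivative_at[symmetric] has_derivative_add has_derivative_mult_right
      assms[unfolded frechet_derivative_works])

lemma C1_plane_lincomb:
  assumes "C1_plane g" and "C1_plane h"
  shows "C1_plane (\<lambda>x. c * g x + d * h x)"
proof -
  have diff: "g differentiable (at y)" "h differentiable (at y)" for y
    using assms unfolding C1_plane_def by auto
  have "partial i (\<lambda>x. c * g x + d * h x) = (\<lambda>y. c * partial i g y + d * partial i h y)" for i
    by (intro ext) (simp add: partial_def frechet_derivative_lincomb diff)
  moreover have "(\<lambda>x. c * g x + d * h x) differentiable (at y)" for y
    using diff by (intro differentiable_add differentiable_mult differentiable_const)
  ultimately show ?thesis
    using assms unfolding C1_plane_def by (auto intro!: continuous_intros)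
qed

lemma supp_lincomb: "supp (\<lambda>x. c * g x + d * h x) \<subseteq> supp g \<union> supp h"
  unfolding supp_def closure_Un[symmetric] by (intro closure_mono) auto

lemma vanishing_outside_supp:
  assumes "y \<notin> supp g"
  shows "g y = 0" and "frechet_derivative g (at y) = (\<lambda>_. 0)"
proof -
  have zero: "g z = 0" if "z \<notin> supp g" for z
    using that closure_subset[of "{x. g x \<noteq> 0}"] unfolding supp_def by auto
  show "g y = 0" using zero assms .
  have "open (- supp g)" unfolding supp_def by (rule open_Compl) (rule closed_closure)
  then have "(g has_derivative (\<lambda>_. 0)) (at y)"
    by (rule has_derivative_transform_within_open[OF has_derivative_const])
      (use assms zero in auto)
  then show "frechet_derivative g (at y) = (\<lambda>_. 0)" by (rule frechet_derivative_at[symmetric])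
qed

lemma supp_frechet_derivative: "supp (\<lambda>y. frechet_derivative g (at y) k) \<subseteq> supp g"
proof -
  have "{y. frechet_derivative g (at y) k \<noteq> 0} \<subseteq> supp g"
    using vanishing_outside_supp(2)[of _ g] by force
  then show ?thesis unfolding supp_def[of "\<lambda>y. frechet_derivative g (at y) k"]
    by (rule closure_minimal) (simp add: supp_def)
qed

lemma vanishing_outside_ball: "supp g \<subseteq> ball 0 r \<Longrightarrow> r \<le> norm y \<Longrightarrow> g y = 0"
  by (rule vanishing_outside_supp(1)) auto

lemma beam_eq_integral_Icc:
  fixes w y :: "real^2"
  assumes cont: "continuous_on UNIV \<phi>" and "0 \<le> R"
    and vanish: "\<And>t. R \<le> t \<Longrightarrow> \<phi> (y + t *\<^sub>R w) = 0"
  shows "beam w \<phi> y = integral {0..R} (\<lambda>t. \<phi> (y + t *\<^sub>R w))"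
proof -
  let ?F = "\<lambda>t. \<phi> (y + t *\<^sub>R w)"
  have "continuous_on {0..R} ?F"
    by (intro continuous_on_compose2[OF cont] continuous_intros) auto
  then have "(?F has_integral integral {0..R} ?F) {0..R}"
    by (intro integrable_integral integrable_continuous_interval)
  moreover have "(?F has_integral 0) {R..}"
    by (rule has_integral_is_0) (simp add: vanish)
  ultimately have "(?F has_integral integral {0..R} ?F + 0) ({0..R} \<union> {R..})"
    by (rule has_integral_Un) (rule negligible_subset[of "{R}"], auto)
  moreover have "{0..R} \<union> {R..} = {0..}" using \<open>0 \<le> R\<close> by auto
  ultimately show ?thesis unfolding beam_def by (simp add: integral_unique)
qed

lemma beam_eq_integral_Icc_ball:
  fixes u y :: "real^2"
  assumes cont: "continuous_on UNIV \<phi>" and supp: "supp \<phi> \<subseteq> ball 0 r"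
    and "norm u = 1" and "norm y \<le> \<rho>"
  shows "beam u \<phi> y = integral {0..\<rho> + \<bar>r\<bar>} (\<lambda>t. \<phi> (y + t *\<^sub>R u))"
proof (rule beam_eq_integral_Icc[OF cont])
  show "0 \<le> \<rho> + \<bar>r\<bar>" using \<open>norm y \<le> \<rho>\<close> norm_ge_zero[of y] abs_ge_zero[of r] by linarith
  fix t assume "\<rho> + \<bar>r\<bar> \<le> t"
  then have "r \<le> \<bar>t\<bar> - norm y" using \<open>norm y \<le> \<rho>\<close> abs_ge_self[of r] abs_ge_self[of t] by linarith
  also have "\<dots> \<le> norm (y + t *\<^sub>R u)" by (rule norm_add_scaleR_unit_ge[OF \<open>norm u = 1\<close>])
  finally show "\<phi> (y + t *\<^sub>R u) = 0" by (rule vanishing_outside_ball[OF supp])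
qed

lemma beam_eq_0:
  assumes "continuous_on UNIV \<phi>" and "\<And>t. 0 \<le> t \<Longrightarrow> \<phi> (y + t *\<^sub>R w) = 0"
  shows "beam w \<phi> y = 0"
  using beam_eq_integral_Icc[OF assms(1) order_refl assms(2)] by simp

lemma beam_eq_0_ahead:
  fixes w y :: "real^2"
  assumes cont: "continuous_on UNIV \<phi>" and supp: "supp \<phi> \<subseteq> ball 0 r"
    and "norm w = 1" and "r \<le> y \<bullet> w"
  shows "beam w \<phi> y = 0"
proof (rule beam_eq_0[OF cont])
  fix t :: real assume "0 \<le> t"
  have "(y + t *\<^sub>R w) \<bullet> w = y \<bullet> w + t"
    using \<open>norm w = 1\<close> by (simp add: inner_add_left dot_square_norm)
  moreover have "(y + t *\<^sub>R w) \<bullet> w \<le> norm (y + t *\<^sub>R w)"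
    using norm_cauchy_schwarz[of "y + t *\<^sub>R w" w] \<open>norm w = 1\<close> by simp
  ultimately show "\<phi> (y + t *\<^sub>R w) = 0"
    using \<open>0 \<le> t\<close> \<open>r \<le> y \<bullet> w\<close> by (intro vanishing_outside_ball[OF supp]) linarith
qed

lemma beam_eq_0_aside:
  fixes w y :: "real^2"
  assumes cont: "continuous_on UNIV \<phi>" and supp: "supp \<phi> \<subseteq> ball 0 r"
    and "norm w = 1" and "r \<le> \<bar>y \<bullet> perp w\<bar>"
  shows "beam w \<phi> y = 0"
proof (rule beam_eq_0[OF cont])
  fix t :: real
  have "(y + t *\<^sub>R w) \<bullet> perp w = y \<bullet> perp w"
    by (simp add: inner_add_left inner_perp_self)
  moreover have "\<bar>(y + t *\<^sub>R w) \<bullet> perp w\<bar> \<le> norm (y + t *\<^sub>R w)"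
    using Cauchy_Schwarz_ineq2[of "y + t *\<^sub>R w" "perp w"] \<open>norm w = 1\<close> by (simp add: norm_perp)
  ultimately show "\<phi> (y + t *\<^sub>R w) = 0"
    using \<open>r \<le> \<bar>y \<bullet> perp w\<bar>\<close> by (intro vanishing_outside_ball[OF supp]) linarith
qed

lemma has_real_derivative_beam_along:
  fixes w x :: "real^2"
  assumes cont: "continuous_on UNIV \<phi>" and supp: "supp \<phi> \<subseteq> ball 0 r"
    and "norm w = 1"
  shows "((\<lambda>s. beam w \<phi> (x + s *\<^sub>R w)) has_real_derivative - \<phi> x) (at 0)"
proof -
  define M where "M = norm x + \<bar>r\<bar> + 1"
  have "1 \<le> M" unfolding M_def using norm_ge_zero[of x] abs_ge_zero[of r] by linarith
  let ?F = "\<lambda>t. \<phi> (x + t *\<^sub>R w)"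
  have cF: "continuous_on S ?F" for S
    by (intro continuous_on_compose2[OF cont] continuous_intros) auto
  have eq: "beam w \<phi> (x + s *\<^sub>R w) = integral {s..M} ?F" if "s \<in> {-1<..<1}" for s
  proof -
    have "beam w \<phi> (x + s *\<^sub>R w) = integral {0..M - s} (\<lambda>t. \<phi> (x + s *\<^sub>R w + t *\<^sub>R w))"
    proof (rule beam_eq_integral_Icc[OF cont])
      show "0 \<le> M - s" using that \<open>1 \<le> M\<close> by simp
      fix t assume "M - s \<le> t"
      then have "r \<le> \<bar>s + t\<bar> - norm x" by (simp add: M_def)
      also have "\<dots> \<le> norm (x + (s + t) *\<^sub>R w)" by (rule norm_add_scaleR_unit_ge[OF \<open>norm w = 1\<close>])
      finally show "\<phi> (x + s *\<^sub>R w + t *\<^sub>R w) = 0"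
        by (simp add: vanishing_outside_ball[OF supp] scaleR_add_left add.assoc)
    qed
    also have "\<dots> = integral {s..M} ?F"
      using integral_shift_Icc_real[of 0 "M - s" ?F s] by (simp add: o_def scaleR_add_left add_ac)
    finally show ?thesis .
  qed
  have "((\<lambda>s. integral {s..M} ?F) has_real_derivative - ?F 0) (at 0 within {-1..M})"
    by (rule integral_has_real_derivative'[OF cF]) (use \<open>1 \<le> M\<close> in simp)
  then have "((\<lambda>s. integral {s..M} ?F) has_real_derivative - \<phi> x) (at 0)"
    using \<open>1 \<le> M\<close> by (simp add: at_within_Icc_at)
  then show ?thesis
    by (rule has_field_derivative_transform_within_open[where S="{-1<..<1}"]) (use eq in auto)
qed

lemma has_real_derivative_beam_shift:
  fixes u v x :: "real^2"
  assumes C1: "C1_plane \<phi>" and supp: "supp \<phi> \<subseteq> ball 0 r" and "norm u = 1"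
  shows "((\<lambda>h. beam u \<phi> (x + h *\<^sub>R v)) has_real_derivative
    beam u (\<lambda>y. frechet_derivative \<phi> (at y) v) x) (at 0)"
proof -
  let ?D = "\<lambda>y. frechet_derivative \<phi> (at y) v"
  define R where "R = norm x + norm v + \<bar>r\<bar>"
  have eq: "beam u \<phi> (x + h *\<^sub>R v) = integral {0..R} (\<lambda>t. \<phi> (x + h *\<^sub>R v + t *\<^sub>R u))"
    if "h \<in> {-1<..<1}" for h
  proof -
    have "norm (x + h *\<^sub>R v) \<le> norm x + \<bar>h\<bar> * norm v" by (metis norm_triangle_ineq norm_scaleR)
    also have "\<dots> \<le> norm x + norm v" using that by (intro add_left_mono mult_left_le_one_le) auto
    finally show ?thesis unfolding R_def
      by (rule beam_eq_integral_Icc_ball[OF continuous_on_C1_plane[OF C1] supp \<open>norm u = 1\<close>])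
  qed
  have eq0: "beam u ?D x = integral {0..R} (\<lambda>t. ?D (x + t *\<^sub>R u))" unfolding R_def
    by (rule beam_eq_integral_Icc_ball[OF continuous_on_frechet_derivative_C1_plane[OF C1]
          order_trans[OF supp_frechet_derivative supp] \<open>norm u = 1\<close>]) simp
  have "((\<lambda>h. integral (cbox 0 R) (\<lambda>t. \<phi> (x + h *\<^sub>R v + t *\<^sub>R u))) has_real_derivative
      integral (cbox 0 R) (\<lambda>t. ?D (x + 0 *\<^sub>R v + t *\<^sub>R u))) (at 0 within UNIV)"
  proof (rule leibniz_rule_field_derivative[where fx = "\<lambda>h t. ?D (x + h *\<^sub>R v + t *\<^sub>R u)"])
    fix h t :: real
    have "((\<lambda>h. \<phi> ((x + t *\<^sub>R u) + h *\<^sub>R v)) has_real_derivative ?D ((x + t *\<^sub>R u) + h *\<^sub>R v)) (at h)"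
      by (rule has_real_derivative_along_line[OF has_derivative_C1_plane[OF C1]])
    then show "((\<lambda>h. \<phi> (x + h *\<^sub>R v + t *\<^sub>R u)) has_real_derivative ?D (x + h *\<^sub>R v + t *\<^sub>R u))
        (at h within UNIV)"
      by (simp add: add_ac)
  next
    show "(\<lambda>t. \<phi> (x + h *\<^sub>R v + t *\<^sub>R u)) integrable_on cbox 0 R" for h
      by (intro integrable_continuous continuous_on_compose2[OF continuous_on_C1_plane[OF C1]]
          continuous_intros) auto
    show "continuous_on (UNIV \<times> cbox 0 R) (\<lambda>(h, t). ?D (x + h *\<^sub>R v + t *\<^sub>R u))"
      unfolding split_beta
      by (intro continuous_on_compose2[OF continuous_on_frechet_derivative_C1_plane[OF C1]]
          continuous_intros) auto
  qed auto
  then have "((\<lambda>h. integral {0..R} (\<lambda>t. \<phi> (x + h *\<^sub>R v + t *\<^sub>R u))) has_real_derivative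
      beam u ?D x) (at 0)"
    using eq0 by simp
  then show ?thesis
    by (rule has_field_derivative_transform_within_open[where S="{-1<..<1}"]) (use eq in auto)
qed

lemma beam_frechet_derivative_along:
  assumes "C1_plane \<phi>" and "supp \<phi> \<subseteq> ball 0 r" and "norm w = 1"
  shows "beam w (\<lambda>y. frechet_derivative \<phi> (at y) w) x = - \<phi> x"
proof -
  have "((\<lambda>s. beam w \<phi> (x + s *\<^sub>R w)) has_real_derivative - \<phi> x) (at 0)"
    by (rule has_real_derivative_beam_along[OF continuous_on_C1_plane[OF assms(1)]
          assms(2,3)])
  with has_real_derivative_beam_shift[OF assms] show ?thesis by (rule DERIV_unique)
qed

locale vline_setting =
  fixes u v :: "real^2" and r :: real and a b :: "real^2 \<Rightarrow> real"
  assumes norm_u: "norm u = 1" and norm_v: "norm v = 1"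
    and C1_a: "C1_plane a" and C1_b: "C1_plane b"
    and supp_a: "supp a \<subseteq> ball 0 r" and supp_b: "supp b \<subseteq> ball 0 r"
begin

lemma has_real_derivative_beam_diff:
  "((\<lambda>h. beam v b (x + h *\<^sub>R v) - beam u a (x + h *\<^sub>R v)) has_real_derivative
    - b x - beam u (\<lambda>y. frechet_derivative a (at y) v) x) (at 0)"
  by (intro DERIV_diff has_real_derivative_beam_shift[OF C1_a supp_a norm_u]
      has_real_derivative_beam_along[OF continuous_on_C1_plane[OF C1_b] supp_b norm_v])

lemma frechet_derivative_eq_if_beam_eq:
  assumes "\<And>y. beam u a y = beam v b y"
  shows "frechet_derivative a (at x) v = frechet_derivative b (at x) u"
proof -
  have beam_derivative_a: "beam u (\<lambda>y. frechet_derivative a (at y) v) y = - b y" for y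
  proof -
    have "((\<lambda>h. beam v b (y + h *\<^sub>R v) - beam u a (y + h *\<^sub>R v)) has_real_derivative 0) (at 0)"
      by (simp add: assms)
    from DERIV_unique[OF has_real_derivative_beam_diff this] show ?thesis by simp
  qed
  have "((\<lambda>s. beam u (\<lambda>y. frechet_derivative a (at y) v) (x + s *\<^sub>R u)) has_real_derivative
      - frechet_derivative a (at x) v) (at 0)"
    by (rule has_real_derivative_beam_along[OF continuous_on_frechet_derivative_C1_plane[OF C1_a]
          order_trans[OF supp_frechet_derivative supp_a] norm_u])
  then have "((\<lambda>s. - b (x + s *\<^sub>R u)) has_real_derivative - frechet_derivative a (at x) v) (at 0)"
    by (simp add: beam_derivative_a)
  moreover have "(b has_derivative frechet_derivative b (at x)) (at (x + 0 *\<^sub>R u))"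
    using has_derivative_C1_plane[OF C1_b] by simp
  then have "((\<lambda>s. b (x + s *\<^sub>R u)) has_real_derivative frechet_derivative b (at x) u) (at 0)"
    by (rule has_real_derivative_along_line)
  then have "((\<lambda>s. - b (x + s *\<^sub>R u)) has_real_derivative - frechet_derivative b (at x) u) (at 0)"
    by (rule DERIV_minus)
  ultimately have "- frechet_derivative a (at x) v = - frechet_derivative b (at x) u"
    by (rule DERIV_unique)
  then show ?thesis by simp
qed

lemma beams_vanish_far_along_v:
  assumes "v \<bullet> perp u \<noteq> 0"
  obtains S where "beam u a (x + S *\<^sub>R v) = 0" and "beam v b (x + S *\<^sub>R v) = 0"
proof -
  define c where "c = \<bar>r\<bar> + norm x"
  define \<delta> where "\<delta> = \<bar>v \<bullet> perp u\<bar>"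
  define S where "S = c + c / \<delta>"
  have "0 \<le> c" and "0 < \<delta>" using assms by (simp_all add: c_def \<delta>_def)
  then have "c \<le> S" and "c \<le> S * \<delta>"
    by (simp_all add: S_def field_simps)
  have x_bound: "\<bar>x \<bullet> w\<bar> \<le> norm x" if "norm w = 1" for w
    using Cauchy_Schwarz_ineq2[of x w] that by simp
  have "\<bar>S * (v \<bullet> perp u)\<bar> = S * \<delta>"
    using \<open>0 \<le> c\<close> \<open>c \<le> S\<close> by (simp add: \<delta>_def abs_mult)
  moreover have "\<bar>x \<bullet> perp u\<bar> \<le> norm x" using x_bound norm_perp norm_u by metis
  moreover have "(x + S *\<^sub>R v) \<bullet> perp u = x \<bullet> perp u + S * (v \<bullet> perp u)"
    by (simp add: inner_add_left)
  ultimately have "r \<le> \<bar>(x + S *\<^sub>R v) \<bullet> perp u\<bar>"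
    using \<open>c \<le> S * \<delta>\<close> unfolding c_def by linarith
  then have "beam u a (x + S *\<^sub>R v) = 0"
    by (rule beam_eq_0_aside[OF continuous_on_C1_plane[OF C1_a] supp_a norm_u])
  moreover have "(x + S *\<^sub>R v) \<bullet> v = x \<bullet> v + S"
    using norm_v by (simp add: inner_add_left dot_square_norm)
  then have "r \<le> (x + S *\<^sub>R v) \<bullet> v"
    using x_bound[OF norm_v] \<open>c \<le> S\<close> unfolding c_def by linarith
  then have "beam v b (x + S *\<^sub>R v) = 0"
    by (rule beam_eq_0_ahead[OF continuous_on_C1_plane[OF C1_b] supp_b norm_v])
  ultimately show ?thesis by (rule that)
qed

lemma beam_eq_if_frechet_derivative_eq:
  assumes "v \<bullet> perp u \<noteq> 0"
    and "\<And>y. frechet_derivative a (at y) v = frechet_derivative b (at y) u"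
  shows "beam u a x = beam v b x"
proof -
  define G where "G y = beam v b y - beam u a y" for y
  have "((\<lambda>h. G (y + h *\<^sub>R v)) has_real_derivative 0) (at 0)" for y
    using has_real_derivative_beam_diff[of y]
    by (simp add: G_def assms(2) beam_frechet_derivative_along[OF C1_b supp_b norm_u])
  then have "((\<lambda>h. G (x + h *\<^sub>R v)) has_real_derivative 0) (at s)" for s
    by (rule has_real_derivative_along_line_at[where D = "\<lambda>_. 0"])
  then have const: "G x = G (x + S *\<^sub>R v)" for S
    using DERIV_isconst_all[of "\<lambda>h. G (x + h *\<^sub>R v)" 0 S] by simp
  obtain S where "beam u a (x + S *\<^sub>R v) = 0" "beam v b (x + S *\<^sub>R v) = 0"
    using beams_vanish_far_along_v[OF assms(1)] .
  with const[of S] show ?thesis by (simp add: G_def)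
qed

end

lemma inner_eq_lincomb_components:
  "(\<lambda>x. f x \<bullet> p) = (\<lambda>x. p$1 * f x $ 1 + p$2 * f x $ 2)" for f :: "'a \<Rightarrow> real^2"
  by (simp add: inner_real2 mult.commute)

lemma C1_plane_inner:
  fixes f :: "real^2 \<Rightarrow> real^2"
  assumes "C1_plane (\<lambda>x. f x $ 1)" and "C1_plane (\<lambda>x. f x $ 2)"
  shows "C1_plane (\<lambda>x. f x \<bullet> p)"
  unfolding inner_eq_lincomb_components using assms by (rule C1_plane_lincomb)

lemma supp_inner_subset:
  fixes f :: "real^2 \<Rightarrow> real^2"
  shows "supp (\<lambda>x. f x \<bullet> p) \<subseteq> supp (\<lambda>x. f x $ 1) \<union> supp (\<lambda>x. f x $ 2)"
  unfolding inner_eq_lincomb_components by (rule supp_lincomb)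

lemma frechet_derivative_transverse_diff:
  fixes f :: "real^2 \<Rightarrow> real^2"
  assumes "(\<lambda>x. f x $ 1) differentiable (at y)" and "(\<lambda>x. f x $ 2) differentiable (at y)"
  shows "frechet_derivative (\<lambda>x. f x \<bullet> perp u) (at y) v
      - frechet_derivative (\<lambda>x. f x \<bullet> perp v) (at y) u = (v \<bullet> perp u) * divergence f y"
proof -
  have frechet_inner: "frechet_derivative (\<lambda>x. f x \<bullet> p) (at y) k
      = p$1 * (k$1 * partial 1 (\<lambda>x. f x $ 1) y + k$2 * partial 2 (\<lambda>x. f x $ 1) y)
      + p$2 * (k$1 * partial 1 (\<lambda>x. f x $ 2) y + k$2 * partial 2 (\<lambda>x. f x $ 2) y)" for p k
    unfolding inner_eq_lincomb_components
    by (simp add: frechet_derivative_lincomb frechet_derivative_plane assms)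
  show ?thesis unfolding frechet_inner divergence_def by (simp add: perp_def inner_real2 algebra_simps)
qed

theorem theorem2:
  fixes u v :: "real^2" and r1 :: real and f :: "real^2 \<Rightarrow> real^2"
  assumes "norm u = 1" and "norm v = 1"
    and "u \<noteq> v" and "independent {u, v}"
    and "r1 > 0"
    and "C2c (ball 0 r1) (\<lambda>x. f x $ 1)" and "C2c (ball 0 r1) (\<lambda>x. f x $ 2)"
  shows "(\<forall>x. TV u v f x = 0) \<longleftrightarrow> (\<forall>x. divergence f x = 0)"
proof -
  have C1: "C1_plane (\<lambda>x. f x $ 1)" "C1_plane (\<lambda>x. f x $ 2)"
    and supp: "supp (\<lambda>x. f x $ 1) \<subseteq> ball 0 r1" "supp (\<lambda>x. f x $ 2) \<subseteq> ball 0 r1"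
    using assms(6,7) unfolding C2c_def C2_plane_def by auto
  interpret vline_setting u v r1 "\<lambda>x. f x \<bullet> perp u" "\<lambda>x. f x \<bullet> perp v"
    by unfold_locales
      (use assms(1,2) C1 supp in \<open>auto intro!: C1_plane_inner order_trans[OF supp_inner_subset]\<close>)
  have \<delta>: "v \<bullet> perp u \<noteq> 0" by (rule independent_imp_inner_perp_nonzero[OF assms(3,4)])
  have divergence_iff: "(frechet_derivative (\<lambda>x. f x \<bullet> perp u) (at x) v
      = frechet_derivative (\<lambda>x. f x \<bullet> perp v) (at x) u) \<longleftrightarrow> divergence f x = 0" for x
    using frechet_derivative_transverse_diff[of f x u v] C1 \<delta> unfolding C1_plane_def by auto
  have "(\<forall>x. TV u v f x = 0) \<longleftrightarrow> (\<forall>x. beam u (\<lambda>x. f x \<bullet> perp u) x = beam v (\<lambda>x. f x \<bullet> perp v) x)"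
    by (auto simp: TV_def)
  also have "\<dots> \<longleftrightarrow> (\<forall>x. frechet_derivative (\<lambda>x. f x \<bullet> perp u) (at x) v
      = frechet_derivative (\<lambda>x. f x \<bullet> perp v) (at x) u)"
    using frechet_derivative_eq_if_beam_eq beam_eq_if_frechet_derivative_eq[OF \<delta>] by blast
  also have "\<dots> \<longleftrightarrow> (\<forall>x. divergence f x = 0)"
    using divergence_iff by blast
  finally show ?thesis .
qed

end
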